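(* Let $(X,d)$ and $(\Lambda,\rho)$ be compact metric spaces, let $\omega:\Lambda\times X\to X$ be continuous, and fix a Borel probability measure $p$ on $\Lambda$. Suppose $\omega$ is $\mathbb{P}$-weakly hyperbolic, i.e. $\mathbb{P}(S)=1$ where $$S=\{\sigma\in\Omega:\ \lim_{n\to\infty}\operatorname{Diam}(\omega_{\sigma_1}\circ\cdots\circ\omega_{\sigma_n}(X))=0\}.$$ Then the operator $T_p:\mathcal{M}_1(X)\to\mathcal{M}_1(X)$ has a unique fixed point $\mu_p$, and $T_p^n(\nu)\to\mu_p$ in the weak$^*$ topology for every $\nu\in\mathcal{M}_1(X)$. Furthermore, if $p(U)>0$ for every nonempty open set $U\subset\Lambda$, then $\operatorname{supp}(\mu_p)=\overline{\Gamma(S)}$.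
   Context: For $\lambda\in\Lambda$, $\omega_\lambda:X\to X$ is $\omega_\lambda(x)=\omega(\lambda,x)$. $\Omega=\Lambda^{\mathbb{N}}$ with the product topology, and $\mathbb{P}=p^{\mathbb{N}}$ is the product (Bernoulli) measure on $\Omega$ induced by $p$. $\operatorname{Diam}(A)=\sup\{d(x,y):x,y\in A\}$. $\mathcal{M}_1(X)$ is the set of Borel probability measures on $X$ with the weak$^*$ topology. The transfer operator is $T_p(\mu)(B)=\int_\Lambda \mu(\omega_\lambda^{-1}(B))\,dp(\lambda)$ for Borel $B\subset X$. For $\sigma\in S$ the nested compact sets $\omega_{\sigma_1}\circ\cdots\circ\omega_{\sigma_n}(X)$ have intersection consisting of a single point, denoted $\Gamma(\sigma)$; this defines $\Gamma:S\to X$ (equivalently $\Gamma(\sigma)=\lim_n \omega_{\sigma_1}\circ\cdots\circ\omega_{\sigma_n}(x)$ for any $x\in X$). *)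

theory Defs
  imports "HOL-Probability.Probability"
begin

text \<open>Composition: ifs_comp w s n = w (s 0) o w (s 1) o ... o w (s (n-1))
  (the paper's sigma_1, ..., sigma_n are s 0, ..., s (n-1)).\<close>
fun ifs_comp :: "('l \<Rightarrow> 'x \<Rightarrow> 'x) \<Rightarrow> (nat \<Rightarrow> 'l) \<Rightarrow> nat \<Rightarrow> 'x \<Rightarrow> 'x" where
  "ifs_comp w s 0 = id"
| "ifs_comp w s (Suc n) = ifs_comp w s n \<circ> w (s n)"

text \<open>The set S of sequences along which the diameters of the nested images shrink to 0
  (the whole type 'x plays the role of the compact space X).\<close>
definition hyp_set :: "('l \<Rightarrow> 'x::metric_space \<Rightarrow> 'x) \<Rightarrow> (nat \<Rightarrow> 'l) set" where
  "hyp_set w = {s. (\<lambda>n. diameter (range (ifs_comp w s n))) \<longlonglongrightarrow> 0}"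

definition ifs_Gamma :: "('l \<Rightarrow> 'x \<Rightarrow> 'x) \<Rightarrow> (nat \<Rightarrow> 'l) \<Rightarrow> 'x" where
  "ifs_Gamma w s = (THE x. x \<in> (\<Inter>n. range (ifs_comp w s n)))"

definition prob_measures :: "'x::topological_space measure set" where
  "prob_measures = {\<mu>. prob_space \<mu> \<and> sets \<mu> = sets borel}"

definition transfer_op :: "'l measure \<Rightarrow> ('l \<Rightarrow> 'x::topological_space \<Rightarrow> 'x) \<Rightarrow> 'x measure \<Rightarrow> 'x measure" where
  "transfer_op p w \<mu> =
     measure_of UNIV (sets borel) (\<lambda>B. \<integral>\<^sup>+ l. emeasure \<mu> (w l -` B) \<partial>p)"

definition weak_star_conv :: "(nat \<Rightarrow> 'x::topological_space measure) \<Rightarrow> 'x measure \<Rightarrow> bool" where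
  "weak_star_conv Ms M \<longleftrightarrow>
     (\<forall>f :: 'x \<Rightarrow> real. continuous_on UNIV f \<and> bounded (range f) \<longrightarrow>
        (\<lambda>n. integral\<^sup>L (Ms n) f) \<longlonglongrightarrow> integral\<^sup>L M f)"

definition measure_support :: "'x::topological_space measure \<Rightarrow> 'x set" where
  "measure_support \<mu> = {x. \<forall>U. open U \<and> x \<in> U \<longrightarrow> emeasure \<mu> U > 0}"

end

theory Submission
  imports Defs
begin

text \<open>
  Under \<open>\<P>\<close>, the iterate \<open>T\<^sub>p\<^sup>n \<nu>\<close> is the law of \<open>\<omega>\<^sub>\<sigma>\<^sub>1 \<circ> \<dots> \<circ> \<omega>\<^sub>\<sigma>\<^sub>n (x)\<close> with \<open>\<sigma> \<sim> \<P>\<close> and \<open>x \<sim> \<nu>\<close>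
  independent: the symbol drawn at each new step may be put innermost because the symbols are i.i.d.
  For \<open>\<sigma> \<in> S\<close> these points converge to \<open>\<Gamma>(\<sigma>)\<close> whatever \<open>x\<close> is, so by dominated convergence
  \<open>T\<^sub>p\<^sup>n \<nu>\<close> converges weak-* to the law \<open>\<mu>\<^sub>p\<close> of \<open>\<Gamma>\<close>, for every \<open>\<nu>\<close>. Since \<open>T\<^sub>p\<close> is weak-* continuous
  and weak-* limits are unique, \<open>\<mu>\<^sub>p\<close> is the unique fixed point.

  As \<open>\<Gamma>\<close> takes values in \<open>\<Gamma>(S)\<close> almost surely, the support of \<open>\<mu>\<^sub>p\<close> lies in its closure. Conversely,
  a sequence agreeing with \<open>\<sigma> \<in> S\<close> up to a small error in its first \<open>n\<close> symbols has \<open>\<Gamma>\<close> close to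
  \<open>\<Gamma>(\<sigma>)\<close> by uniform continuity, and when \<open>p\<close> charges all open sets such sequences have positive
  probability.
\<close>

lemma compact_UNIV_ex_countable_basis:
  assumes "compact (UNIV :: 'a::metric_space set)"
  shows "\<exists>B :: 'a set set. countable B \<and> topological_basis B"
proof -
  have "\<exists>C. finite C \<and> (UNIV :: 'a set) \<subseteq> (\<Union>c\<in>C. ball c (1 / Suc k))" for k :: nat
  proof -
    have "1 / real (Suc k) > 0"
      by simp
    then show ?thesis
      using seq_compact_imp_totally_bounded[OF compact_imp_seq_compact[OF assms]] by blast
  qed
  then obtain C :: "nat \<Rightarrow> 'a set"
    where C: "\<And>k. finite (C k)" "\<And>k. UNIV \<subseteq> (\<Union>c\<in>C k. ball c (1 / Suc k))"
    by metis
  define B where "B = (\<Union>k. (\<lambda>c. ball c (1 / Suc k)) ` C k)"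
  have "countable B"
    unfolding B_def using C(1) by (simp add: countable_finite)
  moreover have "topological_basis B"
  proof (subst topological_basis_iff)
    show "\<And>B'. B' \<in> B \<Longrightarrow> open B'"
      unfolding B_def by auto
    show "\<forall>U. open U \<longrightarrow> (\<forall>x\<in>U. \<exists>B'\<in>B. x \<in> B' \<and> B' \<subseteq> U)"
    proof (intro allI impI ballI)
      fix U :: "'a set" and x :: 'a
      assume "open U" "x \<in> U"
      then obtain e where e: "e > 0" "ball x e \<subseteq> U"
        by (meson open_contains_ball)
      obtain k :: nat where k: "1 / Suc k < e / 2"
        using e by (metis half_gt_zero nat_approx_posE)
      obtain c where c: "c \<in> C k" "x \<in> ball c (1 / Suc k)"
        using C(2)[of k] by blast
      have "ball c (1 / Suc k) \<subseteq> ball x e"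
      proof
        fix y
        assume "y \<in> ball c (1 / Suc k)"
        then have "dist c y < 1 / Suc k"
          by simp
        moreover have "dist x c < 1 / Suc k"
          using c by (simp add: dist_commute)
        ultimately show "y \<in> ball x e"
          using k dist_triangle[of x y c] by simp
      qed
      then show "\<exists>B'\<in>B. x \<in> B' \<and> B' \<subseteq> U"
        using c e unfolding B_def by blast
    qed
  qed
  ultimately show ?thesis
    by blast
qed

text \<open>Second countability is what makes the product of the Borel \<open>\<sigma>\<close>-algebras contain the open sets.\<close>

lemma open_in_sets_pair_borel:
  assumes "compact (UNIV :: 'a::metric_space set)" "compact (UNIV :: 'b::metric_space set)"
    and "open (U :: ('a \<times> 'b) set)"
  shows "U \<in> sets (borel \<Otimes>\<^sub>M borel)"
proof -
  obtain A :: "'a set set" where A: "countable A" "topological_basis A"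
    using compact_UNIV_ex_countable_basis[OF assms(1)] by blast
  obtain B :: "'b set set" where B: "countable B" "topological_basis B"
    using compact_UNIV_ex_countable_basis[OF assms(2)] by blast
  let ?AB = "(\<lambda>(a, b). a \<times> b) ` (A \<times> B)"
  obtain F where F: "F \<subseteq> ?AB" "U = \<Union>F"
    using topological_basis_prod[OF A(2) B(2)] assms(3) unfolding topological_basis_def by blast
  have "countable ?AB"
    using A(1) B(1) by simp
  then have "countable F"
    using F(1) by (rule countable_subset[rotated])
  moreover have "X \<in> sets (borel \<Otimes>\<^sub>M borel)" if X: "X \<in> F" for X
  proof -
    obtain a b where "X = a \<times> b" "a \<in> A" "b \<in> B"
      using X F(1) by auto
    moreover have "open a" "open b"
      using \<open>a \<in> A\<close> \<open>b \<in> B\<close> A(2) B(2) topological_basis_open by auto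
    ultimately show ?thesis
      by auto
  qed
  ultimately show ?thesis
    unfolding F(2) by (intro sets.countable_Union) auto
qed

lemma continuous_on_measurable_pair_borel:
  fixes g :: "'a::metric_space \<times> 'b::metric_space \<Rightarrow> 'c::topological_space"
  assumes "compact (UNIV :: 'a set)" "compact (UNIV :: 'b set)" "continuous_on UNIV g"
  shows "g \<in> (borel \<Otimes>\<^sub>M borel) \<rightarrow>\<^sub>M borel"
proof (rule borel_measurableI)
  fix S :: "'c set"
  assume "open S"
  then have "open (g -` S)"
    using assms(3) by (simp add: continuous_on_open_vimage)
  then show "g -` S \<inter> space (borel \<Otimes>\<^sub>M borel) \<in> sets (borel \<Otimes>\<^sub>M borel)"
    using open_in_sets_pair_borel[OF assms(1,2)] by (simp add: space_pair_measure)
qed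

lemma compact_UNIV_decseq_Inter_nonempty:
  fixes C :: "nat \<Rightarrow> 'a::metric_space set"
  assumes "compact (UNIV :: 'a set)" "\<And>n. closed (C n)" "\<And>n. C n \<noteq> {}" "decseq C"
  shows "\<Inter>(range C) \<noteq> {}"
proof -
  have "compact_space (Met_TC.mtopology :: 'a topology)"
    using assms(1) by (simp add: compact_space_def)
  then show ?thesis
    using assms(2-4) Met_TC.compact_space_nest by auto
qed

lemma (in prob_space) abs_integral_le_const:
  fixes g :: "'a \<Rightarrow> real"
  assumes "g \<in> borel_measurable M" "\<And>x. \<bar>g x\<bar> \<le> B"
  shows "\<bar>\<integral>x. g x \<partial>M\<bar> \<le> B"
proof -
  have "integrable M g"
    using assms by (intro integrable_const_bound[where B=B]) auto
  then have "(\<integral>x. \<bar>g x\<bar> \<partial>M) \<le> B"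
    using assms(2) by (intro integral_le_const) auto
  then show ?thesis
    using integral_abs_bound[of M g] by linarith
qed

lemma (in sequence_space) nn_integral_case_nat:
  assumes "g \<in> borel_measurable S"
  shows "(\<integral>\<^sup>+ s. g s \<partial>S) = (\<integral>\<^sup>+ l. (\<integral>\<^sup>+ s. g (case_nat l s) \<partial>S) \<partial>M)"
proof -
  have case_nat_meas: "(\<lambda>(l, s). case_nat l s) \<in> (M \<Otimes>\<^sub>M S) \<rightarrow>\<^sub>M S"
    by measurable
  have "(\<integral>\<^sup>+ s. g s \<partial>S) = (\<integral>\<^sup>+ s. g s \<partial>distr (M \<Otimes>\<^sub>M S) S (\<lambda>(l, s). case_nat l s))"
    using PiM_iter by simp
  also have "\<dots> = (\<integral>\<^sup>+ z. g (case z of (l, s) \<Rightarrow> case_nat l s) \<partial>(M \<Otimes>\<^sub>M S))"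
    by (rule nn_integral_distr[OF case_nat_meas]) (simp add: assms)
  also have "\<dots> = (\<integral>\<^sup>+ l. (\<integral>\<^sup>+ s. g (case_nat l s) \<partial>S) \<partial>M)"
    using nn_integral_fst[OF measurable_comp[OF case_nat_meas assms]] by (simp add: o_def)
  finally show ?thesis .
qed

lemma emeasure_ball_cylinder_pos:
  fixes M :: "'a::metric_space measure" and s :: "nat \<Rightarrow> 'a"
  assumes "prob_space M" "sets M = sets borel" and full_support: "\<And>U. open U \<Longrightarrow> U \<noteq> {} \<Longrightarrow> emeasure M U > 0"
    and "r > 0"
  shows "emeasure (\<Pi>\<^sub>M i\<in>UNIV. M) (prod_emb UNIV (\<lambda>_. M) {..<n} (\<Pi>\<^sub>E i\<in>{..<n}. ball (s i) r)) > 0"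
proof -
  have ball_pos: "emeasure M (ball (s i) r) > 0" for i
  proof (rule full_support)
    show "ball (s i) r \<noteq> {}"
      using \<open>r > 0\<close> centre_in_ball by blast
  qed simp
  have "(\<Prod>i<m. emeasure M (ball (s i) r)) > 0" for m
    by (induction m) (auto simp: ennreal_zero_less_mult_iff ball_pos)
  then show ?thesis
    by (subst emeasure_PiM_emb) (simp_all add: assms(1,2))
qed

lemma prob_measuresD:
  assumes "\<mu> \<in> prob_measures"
  shows "prob_space \<mu>" "sets \<mu> = sets borel" "space \<mu> = UNIV"
  using assms sets_eq_imp_space_eq[of \<mu> borel] by (auto simp: prob_measures_def)

lemma measurable_continuous_on_prob_measures:
  "continuous_on UNIV g \<Longrightarrow> \<mu> \<in> prob_measures \<Longrightarrow> g \<in> borel_measurable \<mu>"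
  using borel_measurable_continuous_onI measurable_cong_sets[OF prob_measuresD(2) refl] by blast

lemma emeasure_distr_pair_prob_measures:
  assumes "\<nu> \<in> prob_measures" "h \<in> (M \<Otimes>\<^sub>M \<nu>) \<rightarrow>\<^sub>M borel" "B \<in> sets borel"
  shows "emeasure (distr (M \<Otimes>\<^sub>M \<nu>) borel h) B = (\<integral>\<^sup>+ s. emeasure \<nu> {x. h (s, x) \<in> B} \<partial>M)"
proof -
  interpret N: prob_space \<nu>
    using prob_measuresD[OF assms(1)] by simp
  have "emeasure (distr (M \<Otimes>\<^sub>M \<nu>) borel h) B = emeasure (M \<Otimes>\<^sub>M \<nu>) (h -` B \<inter> space (M \<Otimes>\<^sub>M \<nu>))"
    by (rule emeasure_distr[OF assms(2,3)])
  also have "\<dots> = (\<integral>\<^sup>+ s. emeasure \<nu> (Pair s -` (h -` B \<inter> space (M \<Otimes>\<^sub>M \<nu>))) \<partial>M)"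
    by (rule N.emeasure_pair_measure_alt) (rule measurable_sets[OF assms(2,3)])
  also have "\<dots> = (\<integral>\<^sup>+ s. emeasure \<nu> {x. h (s, x) \<in> B} \<partial>M)"
    by (rule nn_integral_cong)
       (auto simp: space_pair_measure prob_measuresD[OF assms(1)] intro!: arg_cong[where f="emeasure \<nu>"])
  finally show ?thesis .
qed

lemma tendsto_infdist_cutoff_indicator:
  assumes "closed F" "F \<noteq> {}"
  shows "(\<lambda>k. max 0 (1 - real k * infdist x F)) \<longlonglongrightarrow> indicator F x"
proof (cases "x \<in> F")
  case True
  then have "infdist x F = 0"
    using in_closed_iff_infdist_zero[OF assms] by simp
  then show ?thesis
    using True by simp
next
  case False
  then have pos: "infdist x F > 0"
    using in_closed_iff_infdist_zero[OF assms] infdist_nonneg[of x F] by simp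
  obtain N :: nat where N: "1 / infdist x F < N"
    using reals_Archimedean2 by blast
  have "\<forall>\<^sub>F k in sequentially. max 0 (1 - real k * infdist x F) = 0"
  proof (rule eventually_sequentiallyI[of N])
    fix k
    assume "N \<le> k"
    then have "1 / infdist x F < real k"
      using N by linarith
    then have "1 < real k * infdist x F"
      using pos by (simp add: field_simps)
    then show "max 0 (1 - real k * infdist x F) = 0"
      by simp
  qed
  then show ?thesis
    using False tendsto_eventually by fastforce
qed

lemma tendsto_integral_infdist_cutoff:
  assumes "\<mu> \<in> prob_measures" "closed F" "F \<noteq> {}"
  shows "(\<lambda>k. \<integral>x. max 0 (1 - real k * infdist x F) \<partial>\<mu>) \<longlonglongrightarrow> measure \<mu> F"
proof -
  interpret prob_space \<mu>
    using prob_measuresD[OF assms(1)] by simp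
  have sets_\<mu>: "sets \<mu> = sets borel"
    using prob_measuresD[OF assms(1)] by simp
  have "(\<lambda>k. \<integral>x. max 0 (1 - real k * infdist x F) \<partial>\<mu>) \<longlonglongrightarrow> (\<integral>x. indicator F x \<partial>\<mu>)"
  proof (rule integral_dominated_convergence[where w="\<lambda>_. 1"])
    show "indicator F \<in> borel_measurable \<mu>"
      using assms(2) by (simp add: measurable_cong_sets[OF sets_\<mu> refl] borel_closed)
    show "(\<lambda>x. max 0 (1 - real k * infdist x F)) \<in> borel_measurable \<mu>" for k
      unfolding measurable_cong_sets[OF sets_\<mu> refl]
      by (intro borel_measurable_continuous_onI continuous_intros)
    show "AE x in \<mu>. (\<lambda>k. max 0 (1 - real k * infdist x F)) \<longlonglongrightarrow> indicator F x"
      using tendsto_infdist_cutoff_indicator[OF assms(2,3)] by simp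
    show "AE x in \<mu>. norm (max 0 (1 - real k * infdist x F)) \<le> 1" for k
      by (simp add: infdist_nonneg)
  qed simp
  then show ?thesis
    using prob_measuresD(3)[OF assms(1)] by simp
qed

lemma prob_measures_eqI_continuous:
  fixes \<mu> \<nu> :: "'x::metric_space measure"
  assumes "\<mu> \<in> prob_measures" "\<nu> \<in> prob_measures"
    and integral_eq: "\<And>f :: 'x \<Rightarrow> real. continuous_on UNIV f \<Longrightarrow> bounded (range f) \<Longrightarrow>
                        integral\<^sup>L \<mu> f = integral\<^sup>L \<nu> f"
  shows "\<mu> = \<nu>"
proof -
  interpret M1: prob_space \<mu>
    using prob_measuresD[OF assms(1)] by simp
  interpret M2: prob_space \<nu>
    using prob_measuresD[OF assms(2)] by simp
  have closed_eq: "emeasure \<mu> F = emeasure \<nu> F" if "closed F" for F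
  proof (cases "F = {}")
    case False
    have "integral\<^sup>L \<mu> (\<lambda>x. max 0 (1 - real k * infdist x F))
        = integral\<^sup>L \<nu> (\<lambda>x. max 0 (1 - real k * infdist x F))" for k
    proof (rule integral_eq)
      show "continuous_on UNIV (\<lambda>x. max 0 (1 - real k * infdist x F))"
        by (intro continuous_intros)
      show "bounded (range (\<lambda>x. max 0 (1 - real k * infdist x F)))"
        by (rule boundedI[where B=1]) (auto simp: infdist_nonneg)
    qed
    with tendsto_integral_infdist_cutoff[OF assms(1) that False]
    have "(\<lambda>k. integral\<^sup>L \<nu> (\<lambda>x. max 0 (1 - real k * infdist x F))) \<longlonglongrightarrow> measure \<mu> F"
      by simp
    then have "measure \<mu> F = measure \<nu> F"
      using tendsto_integral_infdist_cutoff[OF assms(2) that False] by (rule LIMSEQ_unique)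
    then show ?thesis
      by (simp add: M1.emeasure_eq_measure M2.emeasure_eq_measure)
  qed simp
  have sets_closed: "sets (borel :: 'x measure) = sigma_sets UNIV (Collect closed)"
    by (subst borel_eq_closed) (simp add: sets_measure_of)
  show ?thesis
  proof (rule measure_eqI_generator_eq[where E="Collect closed" and \<Omega>=UNIV and A="\<lambda>_. UNIV"])
    show "Int_stable (Collect closed :: 'x set set)"
      by (auto simp: Int_stable_def)
    show "sets \<mu> = sigma_sets UNIV (Collect closed)"
      using prob_measuresD(2)[OF assms(1)] sets_closed by simp
    show "sets \<nu> = sigma_sets UNIV (Collect closed)"
      using prob_measuresD(2)[OF assms(2)] sets_closed by simp
  qed (auto simp: closed_eq)
qed

lemma weak_star_conv_unique:
  fixes \<mu> \<nu> :: "'x::metric_space measure"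
  assumes "weak_star_conv \<mu>s \<mu>" "weak_star_conv \<mu>s \<nu>" "\<mu> \<in> prob_measures" "\<nu> \<in> prob_measures"
  shows "\<mu> = \<nu>"
  using assms(3,4)
proof (rule prob_measures_eqI_continuous)
  fix f :: "'x \<Rightarrow> real"
  assume "continuous_on UNIV f" "bounded (range f)"
  then show "integral\<^sup>L \<mu> f = integral\<^sup>L \<nu> f"
    using assms(1,2) LIMSEQ_unique unfolding weak_star_conv_def by blast
qed

lemma closed_measure_support: "closed (measure_support \<mu>)"
  unfolding closed_def
proof (subst open_subopen, intro ballI)
  fix x
  assume "x \<in> - measure_support \<mu>"
  then obtain U where U: "open U" "x \<in> U" "\<not> emeasure \<mu> U > 0"
    by (auto simp: measure_support_def)
  then have "U \<subseteq> - measure_support \<mu>"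
    by (auto simp: measure_support_def)
  with U show "\<exists>T. open T \<and> x \<in> T \<and> T \<subseteq> - measure_support \<mu>"
    by blast
qed

locale ifs =
  fixes w :: "'l::metric_space \<Rightarrow> 'x::metric_space \<Rightarrow> 'x" and p :: "'l measure"
  assumes compact_X: "compact (UNIV :: 'x set)" and compact_L: "compact (UNIV :: 'l set)"
    and continuous_w: "continuous_on UNIV (\<lambda>(l, x). w l x)"
    and prob_p: "prob_space p" and sets_p: "sets p = sets borel"
begin

abbreviation "P \<equiv> \<Pi>\<^sub>M i\<in>(UNIV :: nat set). p"

sublocale PS: sequence_space p
  unfolding sequence_space_def product_prob_space_def product_prob_space_axioms_def
    product_sigma_finite_def
  using prob_p by (simp add: prob_space_imp_sigma_finite)

lemma space_p [simp]: "space p = UNIV"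
  using sets_eq_imp_space_eq[OF sets_p] by simp

lemma space_P [simp]: "space P = UNIV"
  by (simp add: space_PiM)

lemma continuous_on_w: "continuous_on UNIV (w l)"
proof -
  have "continuous_on UNIV ((\<lambda>(l, x). w l x) \<circ> Pair l)"
    by (intro continuous_on_compose continuous_intros continuous_on_subset[OF continuous_w]) auto
  then show ?thesis
    by (simp add: o_def)
qed

lemma continuous_on_ifs_comp: "continuous_on UNIV (ifs_comp w s n)"
proof (induction n)
  case (Suc n)
  then show ?case
    using continuous_on_compose[OF continuous_on_w continuous_on_subset[OF Suc.IH]] by simp
qed (simp add: continuous_on_id)

lemma measurable_w [measurable (raw)]:
  assumes "f \<in> N \<rightarrow>\<^sub>M p" "g \<in> N \<rightarrow>\<^sub>M borel"
  shows "(\<lambda>z. w (f z) (g z)) \<in> N \<rightarrow>\<^sub>M borel"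
proof -
  have "(\<lambda>z. (f z, g z)) \<in> N \<rightarrow>\<^sub>M (borel \<Otimes>\<^sub>M borel)"
    using assms measurable_cong_sets[OF refl sets_p] by (blast intro: measurable_Pair)
  from measurable_comp[OF this continuous_on_measurable_pair_borel[OF compact_L compact_X continuous_w]]
  show ?thesis
    by (simp add: o_def)
qed

lemma measurable_ifs_comp [measurable (raw)]:
  assumes "f \<in> N \<rightarrow>\<^sub>M P" "g \<in> N \<rightarrow>\<^sub>M borel"
  shows "(\<lambda>z. ifs_comp w (f z) n (g z)) \<in> N \<rightarrow>\<^sub>M borel"
  using assms(2)
proof (induction n arbitrary: g)
  case (Suc n)
  have "(\<lambda>z. w (f z n) (g z)) \<in> N \<rightarrow>\<^sub>M borel"
    using assms(1) Suc.prems by measurable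
  from Suc.IH[OF this] show ?case
    by simp
qed simp

lemma measurable_w_pair:
  assumes "sets \<mu> = sets borel"
  shows "(\<lambda>(l, x). w l x) \<in> (p \<Otimes>\<^sub>M \<mu>) \<rightarrow>\<^sub>M borel"
proof -
  have "snd \<in> (p \<Otimes>\<^sub>M \<mu>) \<rightarrow>\<^sub>M borel"
    using measurable_snd measurable_cong_sets[OF refl assms] by blast
  from measurable_w[OF measurable_fst this] show ?thesis
    by (simp add: split_beta')
qed

lemma measurable_ifs_comp_pair:
  assumes "sets \<nu> = sets borel"
  shows "(\<lambda>(s, x). ifs_comp w s n x) \<in> (P \<Otimes>\<^sub>M \<nu>) \<rightarrow>\<^sub>M borel"
proof -
  have "snd \<in> (P \<Otimes>\<^sub>M \<nu>) \<rightarrow>\<^sub>M borel"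
    using measurable_snd measurable_cong_sets[OF refl assms] by blast
  from measurable_ifs_comp[OF measurable_fst this] show ?thesis
    by (simp add: split_beta')
qed

lemma ifs_comp_case_nat: "ifs_comp w (case_nat l s) (Suc n) = w l \<circ> ifs_comp w s n"
  by (induction n) (auto simp: fun_eq_iff)

lemma transfer_op_eq_distr:
  assumes "\<mu> \<in> prob_measures"
  shows "transfer_op p w \<mu> = distr (p \<Otimes>\<^sub>M \<mu>) borel (\<lambda>(l, x). w l x)"
proof -
  note meas = measurable_w_pair[OF prob_measuresD(2)[OF assms]]
  have "transfer_op p w \<mu> = measure_of UNIV (sets borel) (emeasure (distr (p \<Otimes>\<^sub>M \<mu>) borel (\<lambda>(l, x). w l x)))"
    unfolding transfer_op_def
  proof (rule measure_of_eq)
    fix B :: "'x set"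
    assume "B \<in> sigma_sets UNIV (sets borel)"
    then have "B \<in> sets borel"
      using sets.sigma_sets_eq[of "borel :: 'x measure"] by simp
    then show "(\<integral>\<^sup>+ l. emeasure \<mu> (w l -` B) \<partial>p) = emeasure (distr (p \<Otimes>\<^sub>M \<mu>) borel (\<lambda>(l, x). w l x)) B"
      by (subst emeasure_distr_pair_prob_measures[OF assms meas]) (simp_all add: vimage_def)
  qed simp
  also have "\<dots> = distr (p \<Otimes>\<^sub>M \<mu>) borel (\<lambda>(l, x). w l x)"
    using measure_of_of_measure[of "distr (p \<Otimes>\<^sub>M \<mu>) borel (\<lambda>(l, x). w l x)"] by simp
  finally show ?thesis .
qed

lemma transfer_op_prob_measures:
  assumes "\<mu> \<in> prob_measures"
  shows "transfer_op p w \<mu> \<in> prob_measures"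
proof -
  have "prob_space (p \<Otimes>\<^sub>M \<mu>)"
    using prob_p prob_measuresD(1)[OF assms] by (rule prob_space_pair)
  then have "prob_space (distr (p \<Otimes>\<^sub>M \<mu>) borel (\<lambda>(l, x). w l x))"
    using measurable_w_pair[OF prob_measuresD(2)[OF assms]] by (rule prob_space.prob_space_distr)
  then show ?thesis
    by (simp add: transfer_op_eq_distr[OF assms] prob_measures_def)
qed

lemma funpow_transfer_op_prob_measures:
  "\<nu> \<in> prob_measures \<Longrightarrow> (transfer_op p w ^^ n) \<nu> \<in> prob_measures"
  by (induction n) (auto simp: transfer_op_prob_measures)

lemma emeasure_transfer_op:
  assumes "\<mu> \<in> prob_measures" "B \<in> sets borel"
  shows "emeasure (transfer_op p w \<mu>) B = (\<integral>\<^sup>+ l. emeasure \<mu> (w l -` B) \<partial>p)"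
  using emeasure_distr_pair_prob_measures[OF assms(1) measurable_w_pair[OF prob_measuresD(2)[OF assms(1)]] assms(2)]
  by (simp add: transfer_op_eq_distr[OF assms(1)] vimage_def)

lemma integral_transfer_op:
  fixes f :: "'x \<Rightarrow> real"
  assumes "\<mu> \<in> prob_measures" "f \<in> borel_measurable borel" "\<And>x. \<bar>f x\<bar> \<le> B"
  shows "integral\<^sup>L (transfer_op p w \<mu>) f = (\<integral>l. (\<integral>x. f (w l x) \<partial>\<mu>) \<partial>p)"
proof -
  interpret N: prob_space \<mu>
    using prob_measuresD[OF assms(1)] by simp
  interpret PN: pair_sigma_finite p \<mu>
    by (simp add: N.sigma_finite_measure_axioms pair_sigma_finite.intro prob_p prob_space_imp_sigma_finite)
  interpret PN': prob_space "p \<Otimes>\<^sub>M \<mu>"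
    using prob_p N.prob_space_axioms by (rule prob_space_pair)
  note w_meas = measurable_w_pair[OF prob_measuresD(2)[OF assms(1)]]
  have "integrable (p \<Otimes>\<^sub>M \<mu>) (\<lambda>(l, x). f (w l x))"
    using measurable_comp[OF w_meas assms(2)] assms(3)
    by (intro PN'.integrable_const_bound[where B=B]) (auto simp: o_def split_beta')
  from PN.integral_fst'[OF this] show ?thesis
    unfolding transfer_op_eq_distr[OF assms(1)] integral_distr[OF w_meas assms(2)]
    by (simp add: split_beta')
qed

lemma emeasure_distr_ifs_comp:
  assumes "\<nu> \<in> prob_measures" "B \<in> sets borel"
  shows "emeasure (distr (P \<Otimes>\<^sub>M \<nu>) borel (\<lambda>(s, x). ifs_comp w s n x)) B
       = (\<integral>\<^sup>+ s. emeasure \<nu> {x. ifs_comp w s n x \<in> B} \<partial>P)"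
  using emeasure_distr_pair_prob_measures[OF assms(1) measurable_ifs_comp_pair[OF prob_measuresD(2)[OF assms(1)]] assms(2)]
  by simp

lemma measurable_emeasure_ifs_comp_vimage:
  assumes "\<nu> \<in> prob_measures" "B \<in> sets borel"
  shows "(\<lambda>s. emeasure \<nu> {x. ifs_comp w s n x \<in> B}) \<in> borel_measurable P"
proof -
  interpret N: prob_space \<nu>
    using prob_measuresD[OF assms(1)] by simp
  let ?A = "(\<lambda>(s, x). ifs_comp w s n x) -` B \<inter> space (P \<Otimes>\<^sub>M \<nu>)"
  have "(\<lambda>s. emeasure \<nu> (Pair s -` ?A)) \<in> borel_measurable P"
    using measurable_sets[OF measurable_ifs_comp_pair[OF prob_measuresD(2)[OF assms(1)]] assms(2)]
    by (rule N.measurable_emeasure_Pair)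
  moreover have "(\<lambda>s. emeasure \<nu> (Pair s -` ?A)) = (\<lambda>s. emeasure \<nu> {x. ifs_comp w s n x \<in> B})"
    by (auto simp: space_pair_measure prob_measuresD[OF assms(1)] intro!: arg_cong[where f="emeasure \<nu>"])
  ultimately show ?thesis
    by simp
qed

text \<open>
  The induction step composes the new map on the outside, while \<open>ifs_comp\<close> adds it on the inside;
  shifting the i.i.d. sequence by one symbol (\<open>nn_integral_case_nat\<close>) reconciles the two.
\<close>

lemma funpow_transfer_op_eq_distr:
  assumes "\<nu> \<in> prob_measures"
  shows "(transfer_op p w ^^ n) \<nu> = distr (P \<Otimes>\<^sub>M \<nu>) borel (\<lambda>(s, x). ifs_comp w s n x)"
proof (induction n)
  case 0
  show ?case
  proof (rule measure_eqI)
    fix B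
    assume "B \<in> sets ((transfer_op p w ^^ 0) \<nu>)"
    then have "B \<in> sets borel"
      using prob_measuresD[OF assms] by simp
    then show "emeasure ((transfer_op p w ^^ 0) \<nu>) B
        = emeasure (distr (P \<Otimes>\<^sub>M \<nu>) borel (\<lambda>(s, x). ifs_comp w s 0 x)) B"
      by (subst emeasure_distr_ifs_comp[OF assms]) (simp_all add: PS.emeasure_space_1[simplified])
  qed (use prob_measuresD[OF assms] in simp)
next
  case (Suc n)
  let ?T = "transfer_op p w"
  show ?case
  proof (rule measure_eqI)
    fix B
    assume "B \<in> sets ((?T ^^ Suc n) \<nu>)"
    then have B: "B \<in> sets borel"
      using prob_measuresD[OF funpow_transfer_op_prob_measures[OF assms, of "Suc n"]] by simp
    have wB: "w l -` B \<in> sets borel" for l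
      using measurable_sets[OF borel_measurable_continuous_onI[OF continuous_on_w] B] by simp
    have "emeasure ((?T ^^ Suc n) \<nu>) B = (\<integral>\<^sup>+ l. emeasure ((?T ^^ n) \<nu>) (w l -` B) \<partial>p)"
      using emeasure_transfer_op[OF funpow_transfer_op_prob_measures[OF assms] B] by simp
    also have "\<dots> = (\<integral>\<^sup>+ l. (\<integral>\<^sup>+ s. emeasure \<nu> {x. ifs_comp w s n x \<in> w l -` B} \<partial>P) \<partial>p)"
      by (simp add: Suc.IH emeasure_distr_ifs_comp[OF assms wB])
    also have "\<dots> = (\<integral>\<^sup>+ l. (\<integral>\<^sup>+ s. emeasure \<nu> {x. ifs_comp w (case_nat l s) (Suc n) x \<in> B} \<partial>P) \<partial>p)"
      unfolding ifs_comp_case_nat by simp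
    also have "\<dots> = (\<integral>\<^sup>+ s. emeasure \<nu> {x. ifs_comp w s (Suc n) x \<in> B} \<partial>P)"
      by (rule PS.nn_integral_case_nat[symmetric, OF measurable_emeasure_ifs_comp_vimage[OF assms B]])
    also have "\<dots> = emeasure (distr (P \<Otimes>\<^sub>M \<nu>) borel (\<lambda>(s, x). ifs_comp w s (Suc n) x)) B"
      by (rule emeasure_distr_ifs_comp[OF assms B, symmetric])
    finally show "emeasure ((?T ^^ Suc n) \<nu>) B
        = emeasure (distr (P \<Otimes>\<^sub>M \<nu>) borel (\<lambda>(s, x). ifs_comp w s (Suc n) x)) B" .
  qed (use prob_measuresD[OF funpow_transfer_op_prob_measures[OF assms, of "Suc n"]] in simp)
qed

lemma integral_funpow_transfer_op:
  fixes f :: "'x \<Rightarrow> real"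
  assumes "\<nu> \<in> prob_measures" "f \<in> borel_measurable borel" "\<And>x. \<bar>f x\<bar> \<le> B"
  shows "integral\<^sup>L ((transfer_op p w ^^ n) \<nu>) f = (\<integral>s. (\<integral>x. f (ifs_comp w s n x) \<partial>\<nu>) \<partial>P)"
proof -
  interpret N: prob_space \<nu>
    using prob_measuresD[OF assms(1)] by simp
  interpret PN: pair_sigma_finite P \<nu>
    by (simp add: N.sigma_finite_measure_axioms pair_sigma_finite.intro PS.sigma_finite_measure_axioms)
  interpret PN': prob_space "P \<Otimes>\<^sub>M \<nu>"
    using PS.prob_space_axioms N.prob_space_axioms by (rule prob_space_pair)
  note comp_meas = measurable_ifs_comp_pair[OF prob_measuresD(2)[OF assms(1)], of n]
  have "integrable (P \<Otimes>\<^sub>M \<nu>) (\<lambda>(s, x). f (ifs_comp w s n x))"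
    using measurable_comp[OF comp_meas assms(2)] assms(3)
    by (intro PN'.integrable_const_bound[where B=B]) (auto simp: o_def split_beta')
  from PN.integral_fst'[OF this] show ?thesis
    unfolding funpow_transfer_op_eq_distr[OF assms(1)] integral_distr[OF comp_meas assms(2)]
    by (simp add: split_beta')
qed

lemma weak_star_conv_transfer_op:
  assumes "\<And>n. \<mu>s n \<in> prob_measures" "\<mu> \<in> prob_measures" "weak_star_conv \<mu>s \<mu>"
  shows "weak_star_conv (\<lambda>n. transfer_op p w (\<mu>s n)) (transfer_op p w \<mu>)"
  unfolding weak_star_conv_def
proof (intro allI impI, elim conjE)
  fix f :: "'x \<Rightarrow> real"
  assume f_cont: "continuous_on UNIV f" and "bounded (range f)"
  then obtain B where f_bound: "\<And>x. \<bar>f x\<bar> \<le> B"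
    by (auto simp: bounded_iff)
  have f_meas: "f \<in> borel_measurable borel"
    using f_cont by (rule borel_measurable_continuous_onI)
  have fw_cont: "continuous_on UNIV (\<lambda>x. f (w l x))" for l
    using continuous_on_compose[OF continuous_on_w continuous_on_subset[OF f_cont]] by (simp add: o_def)
  have inner_meas: "(\<lambda>l. \<integral>x. f (w l x) \<partial>\<nu>) \<in> borel_measurable p" if "\<nu> \<in> prob_measures" for \<nu>
  proof -
    interpret N: prob_space \<nu>
      using prob_measuresD[OF that] by simp
    show ?thesis
      using measurable_comp[OF measurable_w_pair[OF prob_measuresD(2)[OF that]] f_meas]
      by (intro N.borel_measurable_lebesgue_integral) (simp add: o_def split_beta')
  qed
  have inner_bound: "\<bar>\<integral>x. f (w l x) \<partial>\<nu>\<bar> \<le> B" if "\<nu> \<in> prob_measures" for \<nu> l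
    using measurable_continuous_on_prob_measures[OF fw_cont that] f_bound
    by (intro prob_space.abs_integral_le_const[OF prob_measuresD(1)[OF that]])
  have inner_lim: "(\<lambda>n. \<integral>x. f (w l x) \<partial>\<mu>s n) \<longlonglongrightarrow> (\<integral>x. f (w l x) \<partial>\<mu>)" for l
  proof -
    have "bounded (range (\<lambda>x. f (w l x)))"
      using f_bound by (intro boundedI[where B=B]) auto
    with fw_cont show ?thesis
      using assms(3) unfolding weak_star_conv_def by blast
  qed
  show "(\<lambda>n. integral\<^sup>L (transfer_op p w (\<mu>s n)) f) \<longlonglongrightarrow> integral\<^sup>L (transfer_op p w \<mu>) f"
    unfolding integral_transfer_op[OF assms(1) f_meas f_bound] integral_transfer_op[OF assms(2) f_meas f_bound]
  proof (rule integral_dominated_convergence[where w="\<lambda>_. B"])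
    show "integrable p (\<lambda>_. B)"
      by simp
  qed (use inner_meas assms(1,2) inner_bound inner_lim in auto)
qed

lemma range_ifs_comp_antimono:
  "m \<le> n \<Longrightarrow> range (ifs_comp w s n) \<subseteq> range (ifs_comp w s m)"
  by (rule lift_Suc_antimono_le[where f="\<lambda>n. range (ifs_comp w s n)"]) auto

lemma compact_range_ifs_comp: "compact (range (ifs_comp w s n))"
  using continuous_on_ifs_comp compact_X by (rule compact_continuous_image)

lemma dist_le_diameter_range_ifs_comp:
  "x \<in> range (ifs_comp w s n) \<Longrightarrow> y \<in> range (ifs_comp w s n) \<Longrightarrow>
    dist x y \<le> diameter (range (ifs_comp w s n))"
  by (rule diameter_bounded_bound[OF compact_imp_bounded[OF compact_range_ifs_comp]])

lemma dist_ifs_comp_uniform: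
  assumes "e > 0"
  shows "\<exists>\<eta>>0. \<forall>t. (\<forall>i<n. dist (t i) (s i) < \<eta>) \<longrightarrow> (\<forall>y. dist (ifs_comp w t n y) (ifs_comp w s n y) < e)"
  using assms
proof (induction n arbitrary: e)
  case 0
  then show ?case
    by (intro exI[of _ 1]) simp
next
  case (Suc n)
  have "e / 2 > 0"
    using Suc.prems by simp
  obtain d1 where d1: "d1 > 0" "\<And>a b. dist a b < d1 \<Longrightarrow> dist (ifs_comp w s n a) (ifs_comp w s n b) < e / 2"
    using compact_uniformly_continuous[OF continuous_on_ifs_comp compact_X] \<open>e / 2 > 0\<close>
    unfolding uniformly_continuous_on_def by (metis UNIV_I dist_commute)
  have "uniformly_continuous_on UNIV (\<lambda>(l, x). w l x)"
    using compact_Times[OF compact_L compact_X] by (intro compact_uniformly_continuous[OF continuous_w]) simp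
  then obtain d2 where d2: "d2 > 0" "\<And>l x. dist l (s n) < d2 \<Longrightarrow> dist (w l x) (w (s n) x) < d1"
    using d1(1) unfolding uniformly_continuous_on_def by (fastforce simp: dist_Pair_Pair)
  obtain h where h: "h > 0" "\<And>t. (\<forall>i<n. dist (t i) (s i) < h) \<Longrightarrow> (\<forall>y. dist (ifs_comp w t n y) (ifs_comp w s n y) < e / 2)"
    using Suc.IH[OF \<open>e / 2 > 0\<close>] by blast
  show ?case
  proof (intro exI[of _ "min h d2"] conjI allI impI)
    fix t :: "nat \<Rightarrow> 'l" and y :: 'x
    assume t: "\<forall>i<Suc n. dist (t i) (s i) < min h d2"
    have "dist (ifs_comp w t n (w (t n) y)) (ifs_comp w s n (w (s n) y))
        \<le> dist (ifs_comp w t n (w (t n) y)) (ifs_comp w s n (w (t n) y))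
          + dist (ifs_comp w s n (w (t n) y)) (ifs_comp w s n (w (s n) y))"
      by (rule dist_triangle)
    also have "\<dots> < e / 2 + e / 2"
      using h(2)[of t] d1(2)[OF d2(2)] t by (intro add_strict_mono) auto
    finally show "dist (ifs_comp w t (Suc n) y) (ifs_comp w s (Suc n) y) < e"
      by simp
  qed (use h(1) d2(1) in simp)
qed

lemma ifs_Gamma_in_range:
  assumes "s \<in> hyp_set w"
  shows "ifs_Gamma w s \<in> range (ifs_comp w s n)"
proof -
  obtain z where z: "\<And>n. z \<in> range (ifs_comp w s n)"
  proof -
    have "\<Inter>(range (\<lambda>n. range (ifs_comp w s n))) \<noteq> {}"
      using compact_imp_closed[OF compact_range_ifs_comp] range_ifs_comp_antimono
      by (intro compact_UNIV_decseq_Inter_nonempty[OF compact_X]) (auto simp: decseq_def)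
    then show thesis
      using that by blast
  qed
  have "y = z" if y: "\<And>n. y \<in> range (ifs_comp w s n)" for y
  proof -
    have "dist y z \<le> 0"
    proof (rule LIMSEQ_le_const)
      show "(\<lambda>n. diameter (range (ifs_comp w s n))) \<longlonglongrightarrow> 0"
        using assms by (simp add: hyp_set_def)
      show "\<exists>N. \<forall>n\<ge>N. dist y z \<le> diameter (range (ifs_comp w s n))"
        using dist_le_diameter_range_ifs_comp[OF y z] by blast
    qed
    then show ?thesis
      by simp
  qed
  then have "ifs_Gamma w s = z"
    unfolding ifs_Gamma_def using z by (intro the_equality) auto
  with z show ?thesis
    by simp
qed

lemma ifs_comp_tendsto_ifs_Gamma:
  assumes "s \<in> hyp_set w"
  shows "(\<lambda>n. ifs_comp w s n x) \<longlonglongrightarrow> ifs_Gamma w s"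
proof -
  have "(\<lambda>n. dist (ifs_comp w s n x) (ifs_Gamma w s)) \<longlonglongrightarrow> 0"
  proof (rule tendsto_sandwich[OF _ _ tendsto_const])
    show "(\<lambda>n. diameter (range (ifs_comp w s n))) \<longlonglongrightarrow> 0"
      using assms by (simp add: hyp_set_def)
    show "\<forall>\<^sub>F n in sequentially. dist (ifs_comp w s n x) (ifs_Gamma w s) \<le> diameter (range (ifs_comp w s n))"
      using dist_le_diameter_range_ifs_comp[OF _ ifs_Gamma_in_range[OF assms]] by simp
  qed simp
  then show ?thesis
    by (rule tendsto_dist_iff[THEN iffD2])
qed

lemma tendsto_integral_ifs_comp:
  fixes f :: "'x \<Rightarrow> real"
  assumes "s \<in> hyp_set w" "\<nu> \<in> prob_measures" "continuous_on UNIV f" "\<And>x. \<bar>f x\<bar> \<le> B"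
  shows "(\<lambda>n. \<integral>x. f (ifs_comp w s n x) \<partial>\<nu>) \<longlonglongrightarrow> f (ifs_Gamma w s)"
proof -
  interpret N: prob_space \<nu>
    using prob_measuresD[OF assms(2)] by simp
  have "(\<lambda>n. \<integral>x. f (ifs_comp w s n x) \<partial>\<nu>) \<longlonglongrightarrow> (\<integral>x. f (ifs_Gamma w s) \<partial>\<nu>)"
  proof (rule integral_dominated_convergence[where w="\<lambda>_. B"])
    show "(\<lambda>x. f (ifs_comp w s n x)) \<in> borel_measurable \<nu>" for n
      using continuous_on_compose[OF continuous_on_ifs_comp continuous_on_subset[OF assms(3)]]
      by (intro measurable_continuous_on_prob_measures[OF _ assms(2)]) (simp add: o_def)
    show "AE x in \<nu>. (\<lambda>n. f (ifs_comp w s n x)) \<longlonglongrightarrow> f (ifs_Gamma w s)"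
      using continuous_on_tendsto_compose[OF assms(3) ifs_comp_tendsto_ifs_Gamma[OF assms(1)]] by simp
  qed (simp_all add: assms(4))
  then show ?thesis
    by (simp add: N.prob_space)
qed

lemma dist_ifs_Gamma_cylinder:
  assumes "s \<in> hyp_set w" "e > 0"
  obtains n \<eta> where "\<eta> > 0"
    "\<And>t. t \<in> hyp_set w \<Longrightarrow> (\<forall>i<n. dist (t i) (s i) < \<eta>) \<Longrightarrow> dist (ifs_Gamma w t) (ifs_Gamma w s) < e"
proof -
  have "\<forall>\<^sub>F n in sequentially. diameter (range (ifs_comp w s n)) < e / 2"
    using assms by (intro order_tendstoD(2)) (auto simp: hyp_set_def)
  then obtain n where n: "diameter (range (ifs_comp w s n)) < e / 2"
    by (auto simp: eventually_sequentially)
  obtain \<eta> where \<eta>: "\<eta> > 0"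
    "\<And>t y. \<forall>i<n. dist (t i) (s i) < \<eta> \<Longrightarrow> dist (ifs_comp w t n y) (ifs_comp w s n y) < e / 2"
    using dist_ifs_comp_uniform[of "e / 2" n s] assms(2) by auto
  show thesis
  proof (rule that[OF \<eta>(1)])
    fix t
    assume t: "t \<in> hyp_set w" "\<forall>i<n. dist (t i) (s i) < \<eta>"
    obtain y where y: "ifs_Gamma w t = ifs_comp w t n y"
      using ifs_Gamma_in_range[OF t(1), of n] by auto
    have "dist (ifs_comp w s n y) (ifs_Gamma w s) \<le> diameter (range (ifs_comp w s n))"
      by (rule dist_le_diameter_range_ifs_comp[OF _ ifs_Gamma_in_range[OF assms(1)]]) simp
    then show "dist (ifs_Gamma w t) (ifs_Gamma w s) < e"
      using \<eta>(2)[OF t(2), of y] n y dist_triangle[of "ifs_comp w t n y" "ifs_Gamma w s" "ifs_comp w s n y"]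
      by simp
  qed
qed

end

locale weakly_hyperbolic_ifs = ifs w p
  for w :: "'l::metric_space \<Rightarrow> 'x::metric_space \<Rightarrow> 'x" and p :: "'l measure" +
  assumes measure_hyp_set: "measure (\<Pi>\<^sub>M i\<in>(UNIV :: nat set). p) (hyp_set w) = 1"
begin

lemma hyp_set_sets: "hyp_set w \<in> sets P"
  using measure_hyp_set measure_notin_sets[of "hyp_set w" P] by fastforce

lemma null_sets_compl_hyp_set: "UNIV - hyp_set w \<in> null_sets P"
proof -
  have "measure P (UNIV - hyp_set w) = 0"
    using PS.prob_compl[OF hyp_set_sets] measure_hyp_set by simp
  moreover have "UNIV - hyp_set w \<in> sets P"
    using sets.compl_sets[OF hyp_set_sets] by simp
  ultimately show ?thesis
    by (auto simp: PS.emeasure_eq_measure null_sets_def)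
qed

lemma AE_hyp_set: "AE s in P. s \<in> hyp_set w"
  using measure_hyp_set by (intro PS.AE_prob_1) simp

text \<open>\<open>ifs_Gamma\<close> is meaningless off \<open>hyp_set w\<close>; it is replaced by a constant there to make it measurable.\<close>

definition coding_map :: "(nat \<Rightarrow> 'l) \<Rightarrow> 'x" where
  "coding_map s = (if s \<in> hyp_set w then ifs_Gamma w s else undefined)"

lemma measurable_coding_map: "coding_map \<in> borel_measurable P"
proof (rule borel_measurable_LIMSEQ_metric)
  show "(\<lambda>s. if s \<in> hyp_set w then ifs_comp w s n undefined else undefined) \<in> borel_measurable P" for n
    using hyp_set_sets by measurable
  show "(\<lambda>n. if s \<in> hyp_set w then ifs_comp w s n undefined else undefined) \<longlonglongrightarrow> coding_map s" for s
    by (cases "s \<in> hyp_set w") (auto simp: coding_map_def ifs_comp_tendsto_ifs_Gamma)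
qed

definition stationary_measure :: "'x measure" where
  "stationary_measure = distr P borel coding_map"

lemma stationary_measure_prob_measures: "stationary_measure \<in> prob_measures"
  using PS.prob_space_distr[OF measurable_coding_map]
  by (simp add: prob_measures_def stationary_measure_def)

lemma emeasure_stationary_measure:
  "U \<in> sets borel \<Longrightarrow> emeasure stationary_measure U = emeasure P (coding_map -` U)"
  unfolding stationary_measure_def by (subst emeasure_distr[OF measurable_coding_map]) auto

lemma weak_star_conv_funpow_transfer_op:
  assumes "\<nu> \<in> prob_measures"
  shows "weak_star_conv (\<lambda>n. (transfer_op p w ^^ n) \<nu>) stationary_measure"
  unfolding weak_star_conv_def
proof (intro allI impI, elim conjE)
  fix f :: "'x \<Rightarrow> real"
  assume f_cont: "continuous_on UNIV f" and "bounded (range f)"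
  then obtain B where f_bound: "\<And>x. \<bar>f x\<bar> \<le> B"
    by (auto simp: bounded_iff)
  have f_meas: "f \<in> borel_measurable borel"
    using f_cont by (rule borel_measurable_continuous_onI)
  interpret N: prob_space \<nu>
    using prob_measuresD[OF assms] by simp
  show "(\<lambda>n. integral\<^sup>L ((transfer_op p w ^^ n) \<nu>) f) \<longlonglongrightarrow> integral\<^sup>L stationary_measure f"
    unfolding integral_funpow_transfer_op[OF assms f_meas f_bound] stationary_measure_def
      integral_distr[OF measurable_coding_map f_meas]
  proof (rule integral_dominated_convergence[where w="\<lambda>_. B"])
    show "(\<lambda>s. \<integral>x. f (ifs_comp w s n x) \<partial>\<nu>) \<in> borel_measurable P" for n
      using measurable_comp[OF measurable_ifs_comp_pair[OF prob_measuresD(2)[OF assms]] f_meas]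
      by (intro N.borel_measurable_lebesgue_integral) (simp add: o_def split_beta')
    show "AE s in P. norm (\<integral>x. f (ifs_comp w s n x) \<partial>\<nu>) \<le> B" for n
    proof (rule AE_I2)
      fix s
      have "continuous_on UNIV (\<lambda>x. f (ifs_comp w s n x))"
        using continuous_on_compose[OF continuous_on_ifs_comp continuous_on_subset[OF f_cont]]
        by (simp add: o_def)
      from measurable_continuous_on_prob_measures[OF this assms]
      show "norm (\<integral>x. f (ifs_comp w s n x) \<partial>\<nu>) \<le> B"
        using N.abs_integral_le_const f_bound by simp
    qed
    show "AE s in P. (\<lambda>n. \<integral>x. f (ifs_comp w s n x) \<partial>\<nu>) \<longlonglongrightarrow> f (coding_map s)"
      using AE_hyp_set
      by eventually_elim (simp add: coding_map_def tendsto_integral_ifs_comp[OF _ assms f_cont f_bound])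
  qed (use measurable_coding_map f_meas in auto)
qed

lemma transfer_op_stationary_measure: "transfer_op p w stationary_measure = stationary_measure"
proof (rule weak_star_conv_unique)
  let ?\<mu>s = "\<lambda>n. (transfer_op p w ^^ n) stationary_measure"
  note conv = weak_star_conv_funpow_transfer_op[OF stationary_measure_prob_measures]
  show "weak_star_conv (\<lambda>n. transfer_op p w (?\<mu>s n)) (transfer_op p w stationary_measure)"
    using funpow_transfer_op_prob_measures[OF stationary_measure_prob_measures]
      stationary_measure_prob_measures conv
    by (rule weak_star_conv_transfer_op)
  show "weak_star_conv (\<lambda>n. transfer_op p w (?\<mu>s n)) stationary_measure"
    unfolding weak_star_conv_def
  proof (intro allI impI)
    fix f :: "'x \<Rightarrow> real"
    assume "continuous_on UNIV f \<and> bounded (range f)"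
    with conv have "(\<lambda>n. integral\<^sup>L (?\<mu>s n) f) \<longlonglongrightarrow> integral\<^sup>L stationary_measure f"
      unfolding weak_star_conv_def by blast
    from LIMSEQ_Suc[OF this] show "(\<lambda>n. integral\<^sup>L (transfer_op p w (?\<mu>s n)) f) \<longlonglongrightarrow> integral\<^sup>L stationary_measure f"
      by simp
  qed
qed (simp_all add: stationary_measure_prob_measures transfer_op_prob_measures)

lemma stationary_measure_unique:
  assumes "\<mu> \<in> prob_measures" "transfer_op p w \<mu> = \<mu>"
  shows "\<mu> = stationary_measure"
proof (rule weak_star_conv_unique)
  have "(transfer_op p w ^^ n) \<mu> = \<mu>" for n
    by (induction n) (simp_all add: assms(2))
  then show "weak_star_conv (\<lambda>_. \<mu>) stationary_measure"
    using weak_star_conv_funpow_transfer_op[OF assms(1)] by simp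
qed (auto simp: weak_star_conv_def assms(1) stationary_measure_prob_measures)

lemma measure_support_stationary_measure_subset:
  "measure_support stationary_measure \<subseteq> closure (ifs_Gamma w ` hyp_set w)"
proof
  fix x
  assume x: "x \<in> measure_support stationary_measure"
  show "x \<in> closure (ifs_Gamma w ` hyp_set w)"
  proof (rule ccontr)
    let ?U = "- closure (ifs_Gamma w ` hyp_set w)"
    assume "x \<notin> closure (ifs_Gamma w ` hyp_set w)"
    moreover have "open ?U"
      by (simp add: open_Compl)
    ultimately have "emeasure stationary_measure ?U > 0"
      using x unfolding measure_support_def by blast
    moreover have "coding_map -` ?U \<subseteq> UNIV - hyp_set w"
      using closure_subset[of "ifs_Gamma w ` hyp_set w"] by (auto simp: coding_map_def)
    then have "emeasure P (coding_map -` ?U) = 0"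
      using null_sets_compl_hyp_set by (auto intro: emeasure_eq_0)
    ultimately show False
      by (simp add: emeasure_stationary_measure)
  qed
qed

lemma ifs_Gamma_in_measure_support:
  assumes full_support: "\<And>U. open U \<Longrightarrow> U \<noteq> {} \<Longrightarrow> emeasure p U > 0" and "s \<in> hyp_set w"
  shows "ifs_Gamma w s \<in> measure_support stationary_measure"
  unfolding measure_support_def
proof (intro CollectI allI impI, elim conjE)
  fix U :: "'x set"
  assume U: "open U" "ifs_Gamma w s \<in> U"
  obtain e where e: "e > 0" "ball (ifs_Gamma w s) e \<subseteq> U"
    using U by (meson open_contains_ball)
  obtain n \<eta> where \<eta>: "\<eta> > 0"
    "\<And>t. t \<in> hyp_set w \<Longrightarrow> (\<forall>i<n. dist (t i) (s i) < \<eta>) \<Longrightarrow> dist (ifs_Gamma w t) (ifs_Gamma w s) < e"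
    using dist_ifs_Gamma_cylinder[OF assms(2) e(1)] by blast
  define C where "C = prod_emb UNIV (\<lambda>_. p) {..<n} (\<Pi>\<^sub>E i\<in>{..<n}. ball (s i) \<eta>)"
  have C_sets: "C \<in> sets P"
    unfolding C_def by (intro measurable_prod_emb sets_PiM_I_finite) (auto simp: sets_p)
  have "C - (UNIV - hyp_set w) \<subseteq> coding_map -` U"
  proof
    fix t
    assume t: "t \<in> C - (UNIV - hyp_set w)"
    then have "dist (ifs_Gamma w t) (ifs_Gamma w s) < e"
      by (intro \<eta>(2)) (auto simp: C_def prod_emb_iff dist_commute)
    then show "t \<in> coding_map -` U"
      using t e(2) by (auto simp: coding_map_def dist_commute)
  qed
  then have "emeasure P (C - (UNIV - hyp_set w)) \<le> emeasure P (coding_map -` U)"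
    using measurable_sets[OF measurable_coding_map, of U] U(1) by (intro emeasure_mono) auto
  moreover have "emeasure P C > 0"
    unfolding C_def using prob_p sets_p full_support \<eta>(1) by (rule emeasure_ball_cylinder_pos)
  then have "emeasure P (C - (UNIV - hyp_set w)) > 0"
    by (simp add: emeasure_Diff_null_set[OF null_sets_compl_hyp_set C_sets])
  ultimately show "emeasure stationary_measure U > 0"
    using U(1) by (simp add: emeasure_stationary_measure)
qed

lemma measure_support_stationary_measure:
  assumes "\<And>U. open U \<Longrightarrow> U \<noteq> {} \<Longrightarrow> emeasure p U > 0"
  shows "measure_support stationary_measure = closure (ifs_Gamma w ` hyp_set w)"
proof
  show "closure (ifs_Gamma w ` hyp_set w) \<subseteq> measure_support stationary_measure"
  proof (rule closure_minimal[OF _ closed_measure_support])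
    show "ifs_Gamma w ` hyp_set w \<subseteq> measure_support stationary_measure"
      using ifs_Gamma_in_measure_support assms by blast
  qed
qed (rule measure_support_stationary_measure_subset)

end

theorem theorem1:
  fixes w :: "'l::metric_space \<Rightarrow> 'x::metric_space \<Rightarrow> 'x"
    and p :: "'l measure"
  assumes "compact (UNIV :: 'x set)"
    and "compact (UNIV :: 'l set)"
    and "continuous_on UNIV (\<lambda>(l, x). w l x)"
    and "prob_space p" and "sets p = sets borel"
    and "measure (\<Pi>\<^sub>M i\<in>(UNIV :: nat set). p) (hyp_set w) = 1"
  shows "\<exists>\<mu>. \<mu> \<in> prob_measures \<and> transfer_op p w \<mu> = \<mu>
          \<and> (\<forall>\<mu>'\<in>prob_measures. transfer_op p w \<mu>' = \<mu>' \<longrightarrow> \<mu>' = \<mu>)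
          \<and> (\<forall>\<nu>\<in>prob_measures. weak_star_conv (\<lambda>n. (transfer_op p w ^^ n) \<nu>) \<mu>)
          \<and> ((\<forall>U. open U \<and> U \<noteq> {} \<longrightarrow> emeasure p U > 0) \<longrightarrow>
               measure_support \<mu> = closure (ifs_Gamma w ` hyp_set w))"
proof -
  interpret weakly_hyperbolic_ifs w p
    unfolding weakly_hyperbolic_ifs_def weakly_hyperbolic_ifs_axioms_def ifs_def using assms by blast
  show ?thesis
    using stationary_measure_prob_measures transfer_op_stationary_measure stationary_measure_unique
      weak_star_conv_funpow_transfer_op measure_support_stationary_measure
    by blast
qed

end
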